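(* Let $(S,K,I)$ be a split graph, and let $u,v\in I$ be distinct vertices such that $uxv$ is a path in $A_4(S)$ for some $x\in K$. Then there is a path $P$ in $A_4(S)$ between $u$ and $v$ with $V(P)\subseteq I$ and $|V(P)|\le 4$.
   Context: All graphs are finite and simple. A split graph is a graph $S$ whose vertex set is a disjoint union $V(S)=K\,\dot\cup\,I$ with $K$ a clique and $I$ an independent set; $(K,I)$ is called a bipartition of $S$, and $(S,K,I)$ denotes $S$ together with this fixed bipartition. A 2-switch in a graph $G$ is performed on four distinct vertices $a,b,c,d$ with $ab,cd\in E(G)$ and $ac,bd\notin E(G)$: it deletes $ab,cd$ and adds $ac,bd$; $a,b,c,d$ are said to participate in it. $A_4(G)$ is the graph with vertex set $V(G)$ in which distinct $u,v$ are adjacent iff some 2-switch on $G$ has both $u$ and $v$ among its participating vertices. *)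

theory Defs
  imports Main
begin

definition simple_graph :: "'a set \<Rightarrow> 'a set set \<Rightarrow> bool" where
  "simple_graph V E \<longleftrightarrow> finite V \<and>
     (\<forall>e\<in>E. \<exists>a b. e = {a, b} \<and> a \<noteq> b \<and> a \<in> V \<and> b \<in> V)"

definition split_graph :: "'a set \<Rightarrow> 'a set set \<Rightarrow> 'a set \<Rightarrow> 'a set \<Rightarrow> bool" where
  "split_graph V E K I \<longleftrightarrow> simple_graph V E \<and> K \<union> I = V \<and> K \<inter> I = {} \<and>
     (\<forall>a\<in>K. \<forall>b\<in>K. a \<noteq> b \<longrightarrow> {a, b} \<in> E) \<and>
     (\<forall>a\<in>I. \<forall>b\<in>I. {a, b} \<notin> E)"

definition two_switch :: "'a set \<Rightarrow> 'a set set \<Rightarrow> 'a \<Rightarrow> 'a \<Rightarrow> 'a \<Rightarrow> 'a \<Rightarrow> bool" where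
  "two_switch V E a b c d \<longleftrightarrow> distinct [a, b, c, d] \<and> {a, b, c, d} \<subseteq> V \<and>
     {a, b} \<in> E \<and> {c, d} \<in> E \<and> {a, c} \<notin> E \<and> {b, d} \<notin> E"

definition A4_adj :: "'a set \<Rightarrow> 'a set set \<Rightarrow> 'a \<Rightarrow> 'a \<Rightarrow> bool" where
  "A4_adj V E u v \<longleftrightarrow> u \<noteq> v \<and>
     (\<exists>a b c d. two_switch V E a b c d \<and> u \<in> {a, b, c, d} \<and> v \<in> {a, b, c, d})"

definition is_path :: "('a \<Rightarrow> 'a \<Rightarrow> bool) \<Rightarrow> 'a list \<Rightarrow> 'a \<Rightarrow> 'a \<Rightarrow> bool" where
  "is_path R ps u v \<longleftrightarrow> ps \<noteq> [] \<and> hd ps = u \<and> last ps = v \<and> distinct ps \<and>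
     (\<forall>i. Suc i < length ps \<longrightarrow> R (ps ! i) (ps ! Suc i))"

end

theory Submission
  imports Defs
begin

text \<open>In a split graph every 2-switch exchanges two edges between the clique and the independent
set, say k i and k' i', for two non-edges k i' and k' i. So if u and v in I are both
A4-adjacent to x in K, there are such switches (x, p, z, q) with u in {p, q} and (x, r, y, s)
with v in {r, s}. Depending on whether y p and z r are edges, one of (x, p, y, s), (z, q, x, r),
(y, p, z, r) is again a 2-switch, so some vertex of {p, q} is A4-adjacent to some vertex of
{r, s}. The walk u, p or q, r or s, v inside I then shortens to the required path.\<close>

lemma is_path_iff_successively:
  "is_path R ps u v \<longleftrightarrow>
     ps \<noteq> [] \<and> hd ps = u \<and> last ps = v \<and> distinct ps \<and> successively R ps"
  by (simp add: is_path_def successively_conv_nth)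

lemma walk_contains_path:
  assumes "successively (\<lambda>a b. a = b \<or> R a b) xs" and "xs \<noteq> []"
  shows "\<exists>ps. is_path R ps (hd xs) (last xs) \<and> set ps \<subseteq> set xs \<and> length ps \<le> length xs"
  using assms
proof (induction xs)
  case Nil
  then show ?case by simp
next
  case (Cons x xs)
  show ?case
  proof (cases "xs = []")
    case True
    then show ?thesis by (intro exI[of _ "[x]"]) (simp add: is_path_iff_successively)
  next
    case False
    with Cons obtain ps where ps: "is_path R ps (hd xs) (last xs)" "set ps \<subseteq> set xs"
      "length ps \<le> length xs"
      by (auto simp: successively_Cons)
    show ?thesis
    proof (cases "x \<in> set ps")
      case True
      then obtain ys zs where "ps = ys @ x # zs" by (meson split_list)
      with ps False show ?thesis
        by (intro exI[of _ "x # zs"]) (auto simp: is_path_iff_successively successively_append_iff)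
    next
      case x_new: False
      have "hd xs \<in> set ps"
        using ps(1) unfolding is_path_def by (metis hd_in_set)
      then have "R x (hd xs)"
        using Cons.prems(1) False x_new ps(1) by (auto simp: successively_Cons is_path_iff_successively)
      with ps False x_new show ?thesis
        by (intro exI[of _ "x # ps"]) (auto simp: is_path_iff_successively successively_Cons)
    qed
  qed
qed

lemma A4_adj_sym: "A4_adj V E u v \<Longrightarrow> A4_adj V E v u"
  unfolding A4_adj_def by blast

definition split_switch :: "'a set set \<Rightarrow> 'a set \<Rightarrow> 'a set \<Rightarrow> 'a \<Rightarrow> 'a \<Rightarrow> 'a \<Rightarrow> 'a \<Rightarrow> bool" where
  "split_switch E K I k i k' i' \<longleftrightarrow> k \<in> K \<and> k' \<in> K \<and> i \<in> I \<and> i' \<in> I \<and>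
     {k, i} \<in> E \<and> {k', i'} \<in> E \<and> {k, i'} \<notin> E \<and> {k', i} \<notin> E"

lemma split_switch_swap: "split_switch E K I k i k' i' \<Longrightarrow> split_switch E K I k' i' k i"
  unfolding split_switch_def by blast

lemma split_switch_A4_adj:
  assumes "split_graph V E K I" and "split_switch E K I k i k' i'"
  shows "A4_adj V E i i'"
proof -
  have "two_switch V E k i i' k'"
    using assms unfolding split_graph_def split_switch_def two_switch_def
    by (auto simp: insert_commute)
  moreover have "i \<noteq> i'"
    using assms(2) unfolding split_switch_def by auto
  ultimately show ?thesis
    unfolding A4_adj_def by blast
qed

lemma two_switch_split_switch:
  assumes "split_graph V E K I" and "two_switch V E a b c d"
  shows "split_switch E K I a b d c \<or> split_switch E K I b a c d"
proof -
  have KI: "K \<union> I = V" "K \<inter> I = {}"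
    and clique: "\<forall>a\<in>K. \<forall>b\<in>K. a \<noteq> b \<longrightarrow> {a, b} \<in> E"
    and indep: "\<forall>a\<in>I. \<forall>b\<in>I. {a, b} \<notin> E"
    using assms(1) unfolding split_graph_def by auto
  have sw: "distinct [a, b, c, d]" "{a, b, c, d} \<subseteq> V"
    "{a, b} \<in> E" "{c, d} \<in> E" "{a, c} \<notin> E" "{b, d} \<notin> E"
    using assms(2) unfolding two_switch_def by auto
  \<comment> \<open>Non-edges cannot lie inside K and edges cannot lie inside I, so the sides alternate
    along the cycle a b d c.\<close>
  show ?thesis
  proof (cases "a \<in> K")
    case True
    then have "c \<in> I" "d \<in> K" "b \<in> I"
      using sw KI clique indep by auto
    with True sw show ?thesis
      unfolding split_switch_def by (auto simp: insert_commute)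
  next
    case False
    then have "a \<in> I" "b \<in> K" "d \<in> I" "c \<in> K"
      using sw KI clique indep by auto
    with sw show ?thesis
      unfolding split_switch_def by (auto simp: insert_commute)
  qed
qed

lemma A4_adj_clique_independent:
  assumes "split_graph V E K I" and "u \<in> I" and "x \<in> K" and "A4_adj V E u x"
  shows "\<exists>i k' i'. split_switch E K I x i k' i' \<and> u \<in> {i, i'}"
proof -
  obtain a b c d where ts: "two_switch V E a b c d"
    and participants: "u \<in> {a, b, c, d}" "x \<in> {a, b, c, d}"
    using assms(4) unfolding A4_adj_def by blast
  have disjoint: "K \<inter> I = {}"
    using assms(1) unfolding split_graph_def by auto
  from two_switch_split_switch[OF assms(1) ts] show ?thesis
  proof
    assume sw: "split_switch E K I a b d c"
    then have "x = a \<or> x = d" "u = b \<or> u = c"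
      using participants assms(2,3) disjoint unfolding split_switch_def by auto
    with sw split_switch_swap[OF sw] show ?thesis by blast
  next
    assume sw: "split_switch E K I b a c d"
    then have "x = b \<or> x = c" "u = a \<or> u = d"
      using participants assms(2,3) disjoint unfolding split_switch_def by auto
    with sw split_switch_swap[OF sw] show ?thesis by blast
  qed
qed

lemma split_switch_common_clique_vertex:
  assumes "split_switch E K I x p z q" and "split_switch E K I x r y s"
  shows "\<exists>\<alpha>\<in>{p, q}. \<exists>\<beta>\<in>{r, s}. \<exists>k k'. split_switch E K I k \<alpha> k' \<beta>"
proof (cases "{y, p} \<in> E")
  case False
  then have "split_switch E K I x p y s"
    using assms unfolding split_switch_def by auto
  then show ?thesis by blast
next
  case yp: True
  show ?thesis
  proof (cases "{z, r} \<in> E")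
    case False
    then have "split_switch E K I z q x r"
      using assms unfolding split_switch_def by (auto simp: insert_commute)
    then show ?thesis by blast
  next
    case True
    with yp have "split_switch E K I y p z r"
      using assms unfolding split_switch_def by (auto simp: insert_commute)
    then show ?thesis by blast
  qed
qed

theorem lemma2p2:
  fixes V K I :: "'a set" and E :: "'a set set"
  assumes "split_graph V E K I"
    and "u \<in> I" and "v \<in> I" and "u \<noteq> v"
    and "x \<in> K" and "is_path (A4_adj V E) [u, x, v] u v"
  shows "\<exists>P. is_path (A4_adj V E) P u v \<and> set P \<subseteq> I \<and> length P \<le> 4"
proof -
  let ?R = "A4_adj V E"
  have "?R u x" "?R v x"
    using assms(6) by (auto simp: is_path_iff_successively intro: A4_adj_sym)
  then obtain p z q r y s where
    sw1: "split_switch E K I x p z q" "u \<in> {p, q}" and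
    sw2: "split_switch E K I x r y s" "v \<in> {r, s}"
    using A4_adj_clique_independent[OF assms(1) assms(2,5)]
      A4_adj_clique_independent[OF assms(1) assms(3,5)] by meson
  then obtain \<alpha> \<beta> k k' where \<alpha>\<beta>: "\<alpha> \<in> {p, q}" "\<beta> \<in> {r, s}" "split_switch E K I k \<alpha> k' \<beta>"
    using split_switch_common_clique_vertex by meson
  have adj: "?R p q" "?R r s" "?R \<alpha> \<beta>"
    using split_switch_A4_adj[OF assms(1)] sw1(1) sw2(1) \<alpha>\<beta>(3) by blast+
  moreover have "?R q p" "?R s r"
    using adj by (simp_all add: A4_adj_sym)
  ultimately have walk: "successively (\<lambda>a b. a = b \<or> ?R a b) [u, \<alpha>, \<beta>, v]"
    using sw1(2) sw2(2) \<alpha>\<beta>(1,2) by auto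
  have "{p, q, r, s} \<subseteq> I"
    using sw1 sw2 unfolding split_switch_def by auto
  with walk_contains_path[OF walk] assms(2,3) \<alpha>\<beta> show ?thesis
    by fastforce
qed

end
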